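(* Let $X=(X_1,\ldots,X_p)^\top$ follow the linear structural equation model $$X_j = \Psi_j + \sum_{k \in \mathrm{PA}(j)} \theta_{j,k} X_k, \qquad j=1,\ldots,p,$$ as described in the context. Fix $j$, a function $f:\mathbb{R}\to\mathbb{R}$, and assume $\beta^{f,j} := E(XX^\top)^{-1}E\{Xf(X_j)\}$ exists. Let $k\in\mathrm{AN}(j)$ with $\mathrm{CH}^{\to j}(k)=\{l\}$. If $\Psi_l$ has the same distribution as $\theta_{l,k}\Psi_k$, then $\beta^{f,j}_k=0$.
   Context: In the model, $\Psi_1,\ldots,\Psi_p$ are independent, centered random variables with $0<\mathrm{var}(\Psi_j)=\sigma_j^2<\infty$ for all $j$, so that the covariance matrix of $X$ exists and has full rank. The parent sets $\mathrm{PA}(j)$ are those of a directed acyclic graph (DAG) on $\{1,\ldots,p\}$ with edges $k\to j$ for $k\in\mathrm{PA}(j)$, and $\theta_{j,k}$ are real coefficients. $\mathrm{AN}(j)$ and $\mathrm{CH}(k)$ denote the ancestors of $j$ and the children of $k$ in this DAG, and $\mathrm{CH}^{\to j}(k) := \mathrm{CH}(k)\cap(\mathrm{AN}(j)\cup\{j\})$. *)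

theory Defs
  imports "HOL-Probability.Probability"
begin

definition dag_edges :: "('n \<Rightarrow> 'n set) \<Rightarrow> ('n \<times> 'n) set" where
  "dag_edges PA = {(k, j). k \<in> PA j}"

definition ancestors :: "('n \<Rightarrow> 'n set) \<Rightarrow> 'n \<Rightarrow> 'n set" where
  "ancestors PA j = {k. (k, j) \<in> (dag_edges PA)\<^sup>+}"

definition children :: "('n \<Rightarrow> 'n set) \<Rightarrow> 'n \<Rightarrow> 'n set" where
  "children PA k = {l. k \<in> PA l}"

definition children_to :: "('n \<Rightarrow> 'n set) \<Rightarrow> 'n \<Rightarrow> 'n \<Rightarrow> 'n set" where
  "children_to PA j k = children PA k \<inter> (ancestors PA j \<union> {j})"

definition second_moment :: "'a measure \<Rightarrow> ('n::finite \<Rightarrow> 'a \<Rightarrow> real) \<Rightarrow> real^'n^'n" where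
  "second_moment M X = (\<chi> i k. integral\<^sup>L M (\<lambda>\<omega>. X i \<omega> * X k \<omega>))"

definition beta_coef :: "'a measure \<Rightarrow> ('n::finite \<Rightarrow> 'a \<Rightarrow> real) \<Rightarrow> (real \<Rightarrow> real) \<Rightarrow> 'n \<Rightarrow> real^'n" where
  "beta_coef M X f j = matrix_inv (second_moment M X)
      *v (\<chi> i. integral\<^sup>L M (\<lambda>\<omega>. X i \<omega> * f (X j \<omega>)))"

end

theory Submission
  imports Defs
begin

(* Write X = B Psi, where B = (I - Theta)^-1 is the matrix of total effects. Then
   E(X X^T) = B D B^T with D = diag(sigma_i^2) and E{X f(X_j)} = B gamma with
   gamma_i = E{Psi_i f(X_j)}, so beta^{f,j} = (I - Theta)^T D^-1 gamma, that is
     beta_k = gamma_k / sigma_k^2 - sum_{i in CH(k)} theta_{i,k} gamma_i / sigma_i^2.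
   A child i of k other than l lies outside AN(j) u {j}, so X_j does not involve Psi_i and
   gamma_i = 0 by independence. Every directed path from k to j passes through l, hence
   B_{j,k} = theta_{l,k} B_{j,l}: X_j depends on (Psi_k, Psi_l) only through
   theta_{l,k} Psi_k + Psi_l. Exchanging Psi_l with theta_{l,k} Psi_k leaves this
   combination unchanged and, as the two have the same law, preserves the joint law of the
   noise; thus gamma_l = theta_{l,k} gamma_k, while sigma_l^2 = theta_{l,k}^2 sigma_k^2.
   The two remaining terms of beta_k cancel. *)

section \<open>Diagonal congruences\<close>

definition diag_mat :: "('n \<Rightarrow> 'a::zero) \<Rightarrow> 'a^'n^'n" where
  "diag_mat d = (\<chi> i j. if i = j then d i else 0)"

lemma diag_mat_mult: "diag_mat d ** diag_mat e = diag_mat (\<lambda>i. d i * e i)"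
  by (simp add: diag_mat_def matrix_matrix_mult_def vec_eq_iff if_distrib[of "\<lambda>x. x * _"]
      cong: if_cong)

lemma diag_mat_vector_mult: "diag_mat d *v x = (\<chi> i. d i * x $ i)"
  by (simp add: diag_mat_def matrix_vector_mult_def vec_eq_iff if_distrib[of "\<lambda>y. y * _"]
      cong: if_cong)

lemma matrix_mult_diag_mat_mult_nth:
  "(A ** diag_mat d ** C) $ r $ q = (\<Sum>s\<in>UNIV. A $ r $ s * d s * C $ s $ q)"
  by (simp add: diag_mat_def matrix_matrix_mult_def if_distrib[of "\<lambda>x. _ * x"] cong: if_cong)

lemma matrix_inv_eqI:
  fixes A H :: "'a::field^'n^'n"
  assumes "H ** A = mat 1"
  shows "matrix_inv A = H"
proof -
  have AH: "A ** H = mat 1"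
    using assms matrix_left_right_inverse by blast
  have "A ** matrix_inv A = mat 1 \<and> matrix_inv A ** A = mat 1"
    unfolding matrix_inv_def by (rule someI[of _ H]) (use assms AH in blast)
  then have "H ** (A ** matrix_inv A) = H"
    by simp
  then show ?thesis
    by (simp add: matrix_mul_assoc assms)
qed

lemma matrix_inv_congruence_diag:
  fixes L B :: "'a::field^'n^'n"
  assumes LB: "L ** B = mat 1" and d: "\<And>i. d i \<noteq> 0"
  shows "matrix_inv (B ** diag_mat d ** transpose B)
    = transpose L ** diag_mat (\<lambda>i. inverse (d i)) ** L"
proof (rule matrix_inv_eqI)
  let ?D' = "diag_mat (\<lambda>i. inverse (d i))"
  have D'D: "?D' ** diag_mat d = mat 1"
    using d by (simp only: diag_mat_mult) (simp add: mat_def diag_mat_def)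
  have "transpose L ** ?D' ** L ** (B ** diag_mat d ** transpose B)
      = transpose L ** ?D' ** (L ** B) ** diag_mat d ** transpose B"
    by (simp add: matrix_mul_assoc)
  also have "\<dots> = transpose L ** (?D' ** diag_mat d) ** transpose B"
    by (simp add: LB matrix_mul_assoc)
  also have "\<dots> = transpose (B ** L)"
    by (simp add: D'D matrix_transpose_mul)
  also have "\<dots> = mat 1"
    using LB by (simp add: matrix_left_right_inverse[of L B])
  finally show "transpose L ** ?D' ** L ** (B ** diag_mat d ** transpose B) = mat 1" .
qed

section \<open>Independent families\<close>

lemma (in prob_space) integral_indep_mult_centered:
  fixes U V :: "'a \<Rightarrow> real" and g :: "real \<Rightarrow> real"
  assumes indep: "indep_var borel U borel V" and g: "g \<in> borel_measurable borel"
    and U: "integrable M U" "expectation U = 0"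
    and UgV: "integrable M (\<lambda>\<omega>. U \<omega> * g (V \<omega>))"
  shows "expectation (\<lambda>\<omega>. U \<omega> * g (V \<omega>)) = 0"
proof -
  have rvU: "random_variable borel U" and rvV: "random_variable borel V"
    using indep indep_var_rv1 indep_var_rv2 by blast+
  let ?P = "distr M borel U" and ?Q = "distr M borel V"
  interpret P: prob_space ?P by (rule prob_space_distr[OF rvU])
  interpret Q: prob_space ?Q by (rule prob_space_distr[OF rvV])
  interpret PQ: pair_prob_space ?P ?Q ..
  have joint: "distr M (borel \<Otimes>\<^sub>M borel) (\<lambda>\<omega>. (U \<omega>, V \<omega>)) = ?P \<Otimes>\<^sub>M ?Q"
    using indep indep_var_distribution_eq by metis
  have UV: "(\<lambda>\<omega>. (U \<omega>, V \<omega>)) \<in> measurable M (borel \<Otimes>\<^sub>M borel)"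
    using rvU rvV by (rule measurable_Pair)
  have h: "(\<lambda>(x, y). x * g y) \<in> borel_measurable (borel \<Otimes>\<^sub>M borel)"
    using g by measurable
  have int: "integrable (?P \<Otimes>\<^sub>M ?Q) (\<lambda>(x, y). x * g y)"
    unfolding joint[symmetric] using UgV by (simp add: integrable_distr_eq[OF UV h])
  have "expectation (\<lambda>\<omega>. U \<omega> * g (V \<omega>))
      = integral\<^sup>L (distr M (borel \<Otimes>\<^sub>M borel) (\<lambda>\<omega>. (U \<omega>, V \<omega>))) (\<lambda>(x, y). x * g y)"
    by (simp add: integral_distr[OF UV h])
  also have "\<dots> = (\<integral>y. (\<integral>x. x * g y \<partial>?P) \<partial>?Q)"
    unfolding joint using PQ.integral_snd[OF int] by simp
  also have "\<dots> = (\<integral>y. (\<integral>x. x \<partial>?P) * g y \<partial>?Q)"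
    by simp
  also have "(\<integral>x. x \<partial>?P) = 0"
    using U by (simp add: integral_distr[OF rvU])
  finally show ?thesis by simp
qed

lemma (in prob_space) indep_vars_permute:
  fixes Y :: "'i::finite \<Rightarrow> 'a \<Rightarrow> 'b"
  assumes indep: "indep_vars (\<lambda>_. N) Y UNIV" and "bij \<pi>"
  shows "indep_vars (\<lambda>_. N) (\<lambda>i. Y (\<pi> i)) UNIV"
proof -
  have rv: "random_variable N (Y i)" for i
    using indep by (simp add: indep_vars_def)
  have Y_law: "distr M (\<Pi>\<^sub>M i\<in>UNIV. N) (\<lambda>\<omega>. \<lambda>i\<in>UNIV. Y i \<omega>) = (\<Pi>\<^sub>M i\<in>UNIV. distr M N (Y i))"
    using indep_vars_iff_distr_eq_PiM[where I=UNIV and M'="\<lambda>_. N" and X=Y] rv indep by simp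
  have "distr M (\<Pi>\<^sub>M i\<in>UNIV. N) (\<lambda>\<omega>. \<lambda>i\<in>UNIV. Y (\<pi> i) \<omega>)
      = distr (distr M (\<Pi>\<^sub>M i\<in>UNIV. N) (\<lambda>\<omega>. \<lambda>i\<in>UNIV. Y i \<omega>)) (\<Pi>\<^sub>M i\<in>UNIV. N)
          (\<lambda>x. \<lambda>i\<in>UNIV. x (\<pi> i))"
    using rv by (subst distr_distr) (auto intro!: distr_cong measurable_restrict)
  also have "\<dots> = distr (\<Pi>\<^sub>M i\<in>UNIV. distr M N (Y i)) (\<Pi>\<^sub>M i\<in>UNIV. distr M N (Y (\<pi> i)))
          (\<lambda>x. \<lambda>i\<in>UNIV. x (\<pi> i))"
    unfolding Y_law by (intro distr_cong sets_PiM_cong) auto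
  also have "\<dots> = (\<Pi>\<^sub>M i\<in>UNIV. distr M N (Y (\<pi> i)))"
    using \<open>bij \<pi>\<close> rv by (intro distr_PiM_reindex prob_space_distr) (auto simp: bij_is_inj)
  finally show ?thesis
    using indep_vars_iff_distr_eq_PiM[where I=UNIV and M'="\<lambda>_. N" and X="\<lambda>i. Y (\<pi> i)"] rv by simp
qed

lemma (in prob_space) indep_vars_integral_eq_of_marginals:
  fixes Y Z :: "'i::finite \<Rightarrow> 'a \<Rightarrow> 'b" and F :: "('i \<Rightarrow> 'b) \<Rightarrow> real"
  assumes Y: "indep_vars (\<lambda>_. N) Y UNIV" and Z: "indep_vars (\<lambda>_. N) Z UNIV"
    and marginals: "\<And>i. distr M N (Y i) = distr M N (Z i)"
    and F: "F \<in> borel_measurable (\<Pi>\<^sub>M i\<in>UNIV. N)"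
  shows "expectation (\<lambda>\<omega>. F (\<lambda>i. Y i \<omega>)) = expectation (\<lambda>\<omega>. F (\<lambda>i. Z i \<omega>))"
proof -
  have rv: "random_variable N (Y i)" "random_variable N (Z i)" for i
    using Y Z by (simp_all add: indep_vars_def)
  have "distr M (\<Pi>\<^sub>M i\<in>UNIV. N) (\<lambda>\<omega>. \<lambda>i\<in>UNIV. Y i \<omega>) = (\<Pi>\<^sub>M i\<in>UNIV. distr M N (Y i))"
    using indep_vars_iff_distr_eq_PiM[where I=UNIV and M'="\<lambda>_. N" and X=Y] rv Y by simp
  also have "\<dots> = distr M (\<Pi>\<^sub>M i\<in>UNIV. N) (\<lambda>\<omega>. \<lambda>i\<in>UNIV. Z i \<omega>)"
    using indep_vars_iff_distr_eq_PiM[where I=UNIV and M'="\<lambda>_. N" and X=Z] rv Z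
    by (simp add: marginals)
  finally have joint_laws: "distr M (\<Pi>\<^sub>M i\<in>UNIV. N) (\<lambda>\<omega>. \<lambda>i\<in>UNIV. Y i \<omega>)
      = distr M (\<Pi>\<^sub>M i\<in>UNIV. N) (\<lambda>\<omega>. \<lambda>i\<in>UNIV. Z i \<omega>)" .
  have "expectation (\<lambda>\<omega>. F (\<lambda>i. W i \<omega>))
      = integral\<^sup>L (distr M (\<Pi>\<^sub>M i\<in>UNIV. N) (\<lambda>\<omega>. \<lambda>i\<in>UNIV. W i \<omega>)) F"
    if "\<And>i. random_variable N (W i)" for W
    using integral_distr[OF measurable_restrict[OF that] F] by (simp add: restrict_UNIV)
  from this[of Y] this[of Z] rv joint_laws show ?thesis
    by simp
qed

lemma (in prob_space) integral_indep_vars_exchange: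
  fixes Y :: "'i::finite \<Rightarrow> 'a \<Rightarrow> real" and F :: "('i \<Rightarrow> real) \<Rightarrow> real"
  assumes indep: "indep_vars (\<lambda>_. borel) Y UNIV" and "k \<noteq> l" and "c \<noteq> 0"
    and same_law: "distr M borel (Y l) = distr M borel (\<lambda>\<omega>. c * Y k \<omega>)"
    and F: "F \<in> borel_measurable (\<Pi>\<^sub>M i\<in>UNIV. borel)"
  shows "expectation (\<lambda>\<omega>. F (\<lambda>i. Y i \<omega>))
    = expectation (\<lambda>\<omega>. F ((\<lambda>i. Y i \<omega>)(l := c * Y k \<omega>, k := Y l \<omega> / c)))"
proof -
  define Q where "Q i \<omega> = ((\<lambda>i. Y i \<omega>)(l := c * Y k \<omega>, k := Y l \<omega> / c)) i" for i \<omega>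
  define \<pi> where "\<pi> i = (if i = k then l else if i = l then k else i)" for i
  define h where "h i x = (if i = l then c * x else if i = k then x / c else x)" for i and x :: real
  have "bij \<pi>"
    by (rule o_bij[of \<pi> \<pi>]) (auto simp: \<pi>_def)
  then have "indep_vars (\<lambda>_. borel) (\<lambda>i \<omega>. h i (Y (\<pi> i) \<omega>)) UNIV"
    unfolding h_def by (intro indep_vars_compose2[OF indep_vars_permute[OF indep]]) auto
  moreover have "(\<lambda>i \<omega>. h i (Y (\<pi> i) \<omega>)) = Q"
    using \<open>k \<noteq> l\<close> by (auto simp: Q_def h_def \<pi>_def fun_eq_iff)
  ultimately have Q_indep: "indep_vars (\<lambda>_. borel) Q UNIV"
    by simp
  have rv: "random_variable borel (Y i)" for i
    using indep by (simp add: indep_vars_def)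
  have "Q k = (\<lambda>\<omega>. Y l \<omega> / c)"
    by (simp add: Q_def fun_eq_iff)
  then have "distr M borel (Q k) = distr (distr M borel (Y l)) borel (\<lambda>x. x / c)"
    using rv by (simp add: distr_distr comp_def)
  also have "\<dots> = distr M borel (Y k)"
    using \<open>c \<noteq> 0\<close> rv by (simp add: same_law distr_distr comp_def)
  finally have law_k: "distr M borel (Q k) = distr M borel (Y k)" .
  have "Q l = (\<lambda>\<omega>. c * Y k \<omega>)" "i \<noteq> k \<Longrightarrow> i \<noteq> l \<Longrightarrow> Q i = Y i" for i
    using \<open>k \<noteq> l\<close> by (simp_all add: Q_def fun_eq_iff)
  with law_k same_law have "distr M borel (Y i) = distr M borel (Q i)" for i
    by (cases "i = k \<or> i = l") auto
  with indep Q_indep have "expectation (\<lambda>\<omega>. F (\<lambda>i. Y i \<omega>)) = expectation (\<lambda>\<omega>. F (\<lambda>i. Q i \<omega>))"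
    using F by (rule indep_vars_integral_eq_of_marginals)
  then show ?thesis
    by (simp only: Q_def)
qed

section \<open>Total effects in a weighted DAG\<close>

lemma parent_in_ancestors: "m \<in> PA r \<Longrightarrow> m \<in> ancestors PA r"
  by (auto simp: ancestors_def dag_edges_def)

lemma ancestors_trans: "a \<in> ancestors PA b \<Longrightarrow> b \<in> ancestors PA c \<Longrightarrow> a \<in> ancestors PA c"
  by (auto simp: ancestors_def)

locale linear_dag =
  fixes PA :: "'n::finite \<Rightarrow> 'n set" and theta :: "'n \<Rightarrow> 'n \<Rightarrow> real"
  assumes acyclic_edges: "acyclic (dag_edges PA)"
begin

lemma wf_edges: "wf (dag_edges PA)"
  by (rule finite_acyclic_wf[OF _ acyclic_edges]) simp

lemma not_own_ancestor: "r \<notin> ancestors PA r"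
  using acyclic_edges by (simp add: ancestors_def acyclic_def)

text \<open>The entry (r, s) of (I - Theta)^-1: the sum over directed paths from s to r of the
  products of the edge coefficients.\<close>

definition total_effect :: "'n \<Rightarrow> 'n \<Rightarrow> real" where
  "total_effect = wfrec (dag_edges PA)
     (\<lambda>b r s. (if s = r then 1 else 0) + (\<Sum>m\<in>PA r. theta r m * b m s))"

lemma total_effect_rec:
  "total_effect r s = (if s = r then 1 else 0) + (\<Sum>m\<in>PA r. theta r m * total_effect m s)"
proof -
  have "adm_wf (dag_edges PA) (\<lambda>b r s. (if s = r then 1 else 0) + (\<Sum>m\<in>PA r. theta r m * b m s))"
    by (auto simp: adm_wf_def dag_edges_def intro!: sum.cong)
  from wfrec_fixpoint[OF wf_edges this] show ?thesis
    unfolding total_effect_def by (metis (no_types, lifting))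
qed

lemma total_effect_eq_0: "s \<noteq> r \<Longrightarrow> s \<notin> ancestors PA r \<Longrightarrow> total_effect r s = 0"
proof (induction r rule: wf_induct_rule[OF wf_edges])
  case (1 r)
  have "total_effect m s = 0" if m: "m \<in> PA r" for m
  proof -
    have "s \<noteq> m"
      using 1(3) parent_in_ancestors[of m PA r, OF m] by blast
    moreover have "s \<notin> ancestors PA m"
      using 1(3) ancestors_trans[OF _ parent_in_ancestors[of m PA r, OF m]] by blast
    ultimately show ?thesis
      using 1(1) m by (simp add: dag_edges_def)
  qed
  with 1 show ?case
    by (simp add: total_effect_rec[of r s])
qed

lemma total_effect_on_parent: "m \<in> PA r \<Longrightarrow> total_effect m r = 0"
  using not_own_ancestor parent_in_ancestors ancestors_trans by (metis total_effect_eq_0)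

lemma total_effect_self: "total_effect r r = 1"
  by (simp add: total_effect_rec[of r r] total_effect_on_parent)

lemma total_effect_through_bottleneck:
  assumes D_closed: "\<And>r m. r \<in> D \<Longrightarrow> m \<in> PA r \<Longrightarrow> m \<in> D"
    and kl: "k \<in> PA l"
    and bottleneck: "\<And>i. i \<in> D \<Longrightarrow> k \<in> PA i \<Longrightarrow> i = l"
  shows "r \<in> D \<Longrightarrow> r \<noteq> k \<Longrightarrow> total_effect r k = theta l k * total_effect r l"
proof (induction r rule: wf_induct_rule[OF wf_edges])
  case (1 r)
  have parent_term: "theta r m * total_effect m k
      = theta l k * (theta r m * total_effect m l) + (if m = k then theta r k else 0)"
    if "m \<in> PA r" for m
  proof (cases "m = k")
    case True
    then show ?thesis by (simp add: total_effect_self total_effect_on_parent[OF kl])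
  next
    case False
    then have "total_effect m k = theta l k * total_effect m l"
      using 1 that D_closed by (simp add: dag_edges_def)
    with False show ?thesis by simp
  qed
  have "total_effect r k = (\<Sum>m\<in>PA r. theta r m * total_effect m k)"
    using 1 by (simp add: total_effect_rec[of r k])
  also have "\<dots> = theta l k * (\<Sum>m\<in>PA r. theta r m * total_effect m l)
      + (if k \<in> PA r then theta r k else 0)"
    by (simp add: parent_term sum.distrib sum_distrib_left)
  also have "\<dots> = theta l k * total_effect r l"
    \<comment> \<open>k is a parent of r exactly when r = l\<close>
    using bottleneck[of r] 1 kl by (auto simp: total_effect_rec[of r l] algebra_simps)
  finally show ?case .
qed

lemma total_effect_through_unique_child:
  assumes "k \<in> ancestors PA j" and "children_to PA j k = {l}"
  shows "total_effect j k = theta l k * total_effect j l"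
proof -
  let ?D = "ancestors PA j \<union> {j}"
  have "k \<in> PA l" and "\<And>i. i \<in> ?D \<Longrightarrow> k \<in> PA i \<Longrightarrow> i = l"
    using assms(2) by (auto simp: children_to_def children_def)
  moreover have "m \<in> ?D" if "r \<in> ?D" "m \<in> PA r" for r m
    using that parent_in_ancestors[of m PA r] ancestors_trans[of m PA r j] by blast
  moreover have "j \<noteq> k"
    using assms(1) not_own_ancestor by blast
  ultimately show ?thesis
    using total_effect_through_bottleneck[of ?D k l j] by blast
qed

lemma total_effect_other_child_eq_0:
  assumes "children_to PA j k = {l}" and "i \<in> children PA k" and "i \<noteq> l"
  shows "total_effect j i = 0"
  using assms by (intro total_effect_eq_0) (auto simp: children_to_def)

definition edge_matrix :: "real^'n^'n" where
  "edge_matrix = (\<chi> r m. if m \<in> PA r then theta r m else 0)"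

definition total_effect_matrix :: "real^'n^'n" where
  "total_effect_matrix = (\<chi> r s. total_effect r s)"

lemma total_effect_matrix_left_inverse: "(mat 1 - edge_matrix) ** total_effect_matrix = mat 1"
proof -
  have "((mat 1 - edge_matrix) ** total_effect_matrix) $ r $ s
      = total_effect r s - (\<Sum>m\<in>PA r. theta r m * total_effect m s)" for r s
  proof -
    have "(\<Sum>m\<in>UNIV. (if m \<in> PA r then theta r m else 0) * total_effect m s)
        = (\<Sum>m\<in>PA r. theta r m * total_effect m s)"
      by (simp add: if_distrib[of "\<lambda>x. x * _"] sum.If_cases Int_absorb1)
    then show ?thesis
      by (simp add: matrix_matrix_mult_def mat_def edge_matrix_def total_effect_matrix_def
          left_diff_distrib sum_subtractf if_distrib[of "\<lambda>x. x * _"] sum.delta)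
  qed
  moreover have "total_effect r s - (\<Sum>m\<in>PA r. theta r m * total_effect m s)
      = (if r = s then 1 else 0)"
    for r s
    by (subst total_effect_rec[of r s]) simp
  ultimately show ?thesis
    by (simp add: vec_eq_iff mat_def)
qed

end

section \<open>Linear structural equation models\<close>

locale linear_sem = prob_space M + linear_dag PA theta
  for M :: "'a measure" and PA :: "'n::finite \<Rightarrow> 'n set" and theta +
  fixes Psi X :: "'n \<Rightarrow> 'a \<Rightarrow> real"
  assumes noise_measurable [measurable]: "\<And>i. Psi i \<in> borel_measurable M"
    and noise_indep: "indep_vars (\<lambda>_. borel) Psi UNIV"
    and noise_integrable: "\<And>i. integrable M (Psi i)"
    and noise_centered: "\<And>i. expectation (Psi i) = 0"
    and noise_square_integrable: "\<And>i. integrable M (\<lambda>\<omega>. (Psi i \<omega>)\<^sup>2)"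
    and noise_variance_pos: "\<And>i. variance (Psi i) > 0"
    and structural_eq: "\<And>i \<omega>. \<omega> \<in> space M \<Longrightarrow> X i \<omega> = Psi i \<omega> + (\<Sum>m\<in>PA i. theta i m * X m \<omega>)"
begin

lemma X_eq_total_effects: "\<omega> \<in> space M \<Longrightarrow> X r \<omega> = (\<Sum>s\<in>UNIV. total_effect r s * Psi s \<omega>)"
proof (induction r rule: wf_induct_rule[OF wf_edges])
  case (1 r)
  have "X r \<omega> = Psi r \<omega> + (\<Sum>m\<in>PA r. theta r m * X m \<omega>)"
    by (rule structural_eq) fact
  also have "\<dots> = Psi r \<omega> + (\<Sum>m\<in>PA r. theta r m * (\<Sum>s\<in>UNIV. total_effect m s * Psi s \<omega>))"
    using 1 by (simp add: dag_edges_def)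
  also have "\<dots> = (\<Sum>s\<in>UNIV. (if s = r then 1 else 0) * Psi s \<omega>)
      + (\<Sum>s\<in>UNIV. (\<Sum>m\<in>PA r. theta r m * total_effect m s) * Psi s \<omega>)"
    by (simp add: if_distrib[of "\<lambda>x. x * _"] sum_distrib_left sum_distrib_right mult.assoc
        sum.swap[of _ "PA r"] cong: if_cong)
  also have "\<dots> = (\<Sum>s\<in>UNIV. total_effect r s * Psi s \<omega>)"
    by (simp add: total_effect_rec[of r] distrib_right sum.distrib)
  finally show ?case .
qed

definition noise_var :: "'n \<Rightarrow> real" where
  "noise_var i = expectation (\<lambda>\<omega>. (Psi i \<omega>)\<^sup>2)"

lemma noise_var_pos: "noise_var i > 0"
  using noise_variance_pos[of i] by (simp add: noise_var_def noise_centered)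

lemma integrable_noise_mult: "integrable M (\<lambda>\<omega>. Psi s \<omega> * Psi t \<omega>)"
proof (rule Bochner_Integration.integrable_bound)
  show "integrable M (\<lambda>\<omega>. (Psi s \<omega>)\<^sup>2 + (Psi t \<omega>)\<^sup>2)"
    using noise_square_integrable by simp
  show "AE \<omega> in M. norm (Psi s \<omega> * Psi t \<omega>) \<le> norm ((Psi s \<omega>)\<^sup>2 + (Psi t \<omega>)\<^sup>2)"
  proof (intro AE_I2)
    fix \<omega>
    have "2 * \<bar>Psi s \<omega>\<bar> * \<bar>Psi t \<omega>\<bar> \<le> (Psi s \<omega>)\<^sup>2 + (Psi t \<omega>)\<^sup>2"
      using sum_squares_bound[of "\<bar>Psi s \<omega>\<bar>" "\<bar>Psi t \<omega>\<bar>"] by simp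
    moreover have "0 \<le> \<bar>Psi s \<omega>\<bar> * \<bar>Psi t \<omega>\<bar>"
      by simp
    ultimately have "\<bar>Psi s \<omega>\<bar> * \<bar>Psi t \<omega>\<bar> \<le> (Psi s \<omega>)\<^sup>2 + (Psi t \<omega>)\<^sup>2"
      by linarith
    then show "norm (Psi s \<omega> * Psi t \<omega>) \<le> norm ((Psi s \<omega>)\<^sup>2 + (Psi t \<omega>)\<^sup>2)"
      by (simp add: abs_mult)
  qed
qed simp

lemma integral_noise_mult:
  "expectation (\<lambda>\<omega>. Psi s \<omega> * Psi t \<omega>) = (if s = t then noise_var s else 0)"
proof (cases "s = t")
  case True
  then show ?thesis by (simp add: noise_var_def power2_eq_square)
next
  case False
  have "indep_vars (\<lambda>_. borel) Psi {s, t}"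
    using indep_vars_subset[OF noise_indep] by simp
  then have "expectation (\<lambda>\<omega>. \<Prod>i\<in>{s, t}. Psi i \<omega>) = (\<Prod>i\<in>{s, t}. expectation (Psi i))"
    using noise_integrable by (intro indep_vars_lebesgue_integral) auto
  with False show ?thesis
    by (simp add: noise_centered)
qed

lemma
  assumes "\<And>s. integrable M (\<lambda>\<omega>. Psi s \<omega> * Z \<omega>)"
  shows integrable_X_mult: "integrable M (\<lambda>\<omega>. X r \<omega> * Z \<omega>)"
    and integral_X_mult:
      "expectation (\<lambda>\<omega>. X r \<omega> * Z \<omega>)
        = (\<Sum>s\<in>UNIV. total_effect r s * expectation (\<lambda>\<omega>. Psi s \<omega> * Z \<omega>))"
proof -
  have X_Z: "X r \<omega> * Z \<omega> = (\<Sum>s\<in>UNIV. total_effect r s * Psi s \<omega>) * Z \<omega>" if "\<omega> \<in> space M" for \<omega>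
    using that by (simp add: X_eq_total_effects)
  show "integrable M (\<lambda>\<omega>. X r \<omega> * Z \<omega>)"
    using assms
    by (simp add: X_Z sum_distrib_right mult.assoc cong: Bochner_Integration.integrable_cong)
  show "expectation (\<lambda>\<omega>. X r \<omega> * Z \<omega>)
      = (\<Sum>s\<in>UNIV. total_effect r s * expectation (\<lambda>\<omega>. Psi s \<omega> * Z \<omega>))"
    using assms
    by (simp add: X_Z sum_distrib_right mult.assoc cong: Bochner_Integration.integral_cong)
qed

lemma integrable_noise_mult_X: "integrable M (\<lambda>\<omega>. Psi s \<omega> * X q \<omega>)"
  using integrable_X_mult[of "Psi s" q] integrable_noise_mult by (simp add: mult.commute)

lemma integral_noise_mult_X: "expectation (\<lambda>\<omega>. Psi s \<omega> * X q \<omega>) = total_effect q s * noise_var s"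
proof -
  have "expectation (\<lambda>\<omega>. Psi s \<omega> * X q \<omega>) = expectation (\<lambda>\<omega>. X q \<omega> * Psi s \<omega>)"
    by (simp add: mult.commute)
  also have "\<dots> = (\<Sum>t\<in>UNIV. total_effect q t * (if t = s then noise_var t else 0))"
    using integral_X_mult[of "Psi s" q] integrable_noise_mult by (simp add: integral_noise_mult)
  finally show ?thesis
    by (simp add: if_distrib[of "\<lambda>x. _ * x"] cong: if_cong)
qed

lemma second_moment_eq:
  "second_moment M X = total_effect_matrix ** diag_mat noise_var ** transpose total_effect_matrix"
proof -
  have "expectation (\<lambda>\<omega>. X r \<omega> * X q \<omega>)
      = (\<Sum>s\<in>UNIV. total_effect r s * noise_var s * total_effect q s)"
    for r q
    using integral_X_mult[of "X q" r] integrable_noise_mult_X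
    by (simp add: integral_noise_mult_X mult_ac)
  then show ?thesis
    by (simp add: vec_eq_iff second_moment_def matrix_mult_diag_mat_mult_nth
        total_effect_matrix_def transpose_def)
qed

lemma integrable_noise_mult_of_X_mult:
  assumes "\<And>i. integrable M (\<lambda>\<omega>. X i \<omega> * Z \<omega>)"
  shows "integrable M (\<lambda>\<omega>. Psi i \<omega> * Z \<omega>)"
proof -
  have "Psi i \<omega> * Z \<omega> = X i \<omega> * Z \<omega> - (\<Sum>m\<in>PA i. theta i m * (X m \<omega> * Z \<omega>))"
    if "\<omega> \<in> space M" for \<omega>
    using structural_eq[OF that, of i] by (simp add: algebra_simps sum_distrib_left)
  with assms show ?thesis
    by (simp cong: Bochner_Integration.integrable_cong)
qed

lemma regression_coef_nth:
  assumes XZ: "\<And>i. integrable M (\<lambda>\<omega>. X i \<omega> * Z \<omega>)"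
  shows "(matrix_inv (second_moment M X) *v (\<chi> i. expectation (\<lambda>\<omega>. X i \<omega> * Z \<omega>))) $ q
    = expectation (\<lambda>\<omega>. Psi q \<omega> * Z \<omega>) / noise_var q
      - (\<Sum>i\<in>children PA q. theta i q * (expectation (\<lambda>\<omega>. Psi i \<omega> * Z \<omega>) / noise_var i))"
proof -
  let ?L = "mat 1 - edge_matrix" and ?B = total_effect_matrix
    and ?D' = "diag_mat (\<lambda>i. inverse (noise_var i))"
  define \<gamma> where "\<gamma> = (\<chi> s. expectation (\<lambda>\<omega>. Psi s \<omega> * Z \<omega>))"
  have \<Psi>Z: "integrable M (\<lambda>\<omega>. Psi s \<omega> * Z \<omega>)" for s
    using XZ by (rule integrable_noise_mult_of_X_mult)
  have cross: "(\<chi> i. expectation (\<lambda>\<omega>. X i \<omega> * Z \<omega>)) = ?B *v \<gamma>"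
    by (simp add: vec_eq_iff integral_X_mult[OF \<Psi>Z] matrix_vector_mult_def
        total_effect_matrix_def \<gamma>_def)
  have "matrix_inv (second_moment M X) = transpose ?L ** ?D' ** ?L"
    unfolding second_moment_eq using total_effect_matrix_left_inverse noise_var_pos
    by (intro matrix_inv_congruence_diag) (auto simp: less_imp_neq[symmetric])
  then have "matrix_inv (second_moment M X) *v (?B *v \<gamma>)
      = transpose ?L *v (?D' *v ((?L ** ?B) *v \<gamma>))"
    by (simp add: matrix_vector_mul_assoc matrix_mul_assoc)
  also have "\<dots> = transpose ?L *v (?D' *v \<gamma>)"
    by (simp add: total_effect_matrix_left_inverse)
  also have "(transpose ?L *v (?D' *v \<gamma>)) $ q
      = (\<Sum>i\<in>UNIV. ((if i = q then 1 else 0) - (if q \<in> PA i then theta i q else 0))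
          * (\<gamma> $ i / noise_var i))"
    unfolding diag_mat_vector_mult
    by (simp add: matrix_vector_mult_def transpose_def mat_def edge_matrix_def divide_inverse
        mult_ac)
  also have "\<dots> = \<gamma> $ q / noise_var q - (\<Sum>i\<in>children PA q. theta i q * (\<gamma> $ i / noise_var i))"
    by (simp add: left_diff_distrib diff_divide_distrib sum_subtractf if_distrib[of "\<lambda>x. x * _"]
        if_distrib[of "\<lambda>x. x / _"] sum.If_cases children_def cong: if_cong)
  finally show ?thesis
    by (simp add: cross \<gamma>_def)
qed

lemma integral_noise_mult_eq_0:
  assumes no_effect: "total_effect j i = 0" and g: "g \<in> borel_measurable borel"
    and integrable: "integrable M (\<lambda>\<omega>. Psi i \<omega> * g (X j \<omega>))"
  shows "expectation (\<lambda>\<omega>. Psi i \<omega> * g (X j \<omega>)) = 0"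
proof -
  define V where "V = (\<lambda>\<omega>. \<Sum>s\<in>-{i}. total_effect j s * Psi s \<omega>)"
  have X_V: "X j \<omega> = V \<omega>" if "\<omega> \<in> space M" for \<omega>
    using that no_effect
    by (simp add: X_eq_total_effects V_def sum.remove[of UNIV i] Compl_eq_Diff_UNIV)
  have "indep_var borel ((\<lambda>x. x i) \<circ> (\<lambda>\<omega>. \<lambda>s\<in>{i}. Psi s \<omega>))
      borel ((\<lambda>x. \<Sum>s\<in>-{i}. total_effect j s * x s) \<circ> (\<lambda>\<omega>. \<lambda>s\<in>-{i}. Psi s \<omega>))"
    by (rule indep_var_compose[OF indep_var_restrict[OF noise_indep]]) auto
  then have "indep_var borel (Psi i) borel V"
    by (simp add: comp_def V_def)
  moreover have "integrable M (\<lambda>\<omega>. Psi i \<omega> * g (V \<omega>))"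
    using integrable by (simp add: X_V cong: Bochner_Integration.integrable_cong)
  ultimately have "expectation (\<lambda>\<omega>. Psi i \<omega> * g (V \<omega>)) = 0"
    using g noise_integrable noise_centered by (intro integral_indep_mult_centered)
  then show ?thesis
    by (simp add: X_V cong: Bochner_Integration.integral_cong)
qed

lemma noise_var_eq_of_distr_eq:
  assumes "distr M borel (Psi l) = distr M borel (\<lambda>\<omega>. c * Psi k \<omega>)"
  shows "noise_var l = c\<^sup>2 * noise_var k"
proof -
  have "noise_var l = integral\<^sup>L (distr M borel (Psi l)) (\<lambda>x. x\<^sup>2)"
    by (simp add: noise_var_def integral_distr)
  also have "\<dots> = expectation (\<lambda>\<omega>. (c * Psi k \<omega>)\<^sup>2)"
    by (simp add: assms integral_distr)
  also have "\<dots> = c\<^sup>2 * noise_var k"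
    by (simp add: noise_var_def power_mult_distrib)
  finally show ?thesis .
qed

lemma integral_noise_mult_exchange:
  assumes "k \<noteq> l" and "c \<noteq> 0"
    and same_law: "distr M borel (Psi l) = distr M borel (\<lambda>\<omega>. c * Psi k \<omega>)"
    and effects: "total_effect j k = c * total_effect j l"
    and g [measurable]: "g \<in> borel_measurable borel"
  shows "expectation (\<lambda>\<omega>. Psi l \<omega> * g (X j \<omega>)) = c * expectation (\<lambda>\<omega>. Psi k \<omega> * g (X j \<omega>))"
proof -
  let ?F = "\<lambda>x. x l * g (\<Sum>s\<in>UNIV. total_effect j s * x s)"
  have "(\<Sum>s\<in>UNIV. total_effect j s * (x(l := c * x k, k := x l / c)) s)
      = (\<Sum>s\<in>UNIV. total_effect j s * x s)" for x :: "'n \<Rightarrow> real"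
  proof -
    have "(x(l := c * x k, k := x l / c)) s
        = x s + (if s = l then c * x k - x l else 0) + (if s = k then x l / c - x k else 0)" for s
      using \<open>k \<noteq> l\<close> by auto
    then have "(\<Sum>s\<in>UNIV. total_effect j s * (x(l := c * x k, k := x l / c)) s)
        = (\<Sum>s\<in>UNIV. total_effect j s * x s)
          + total_effect j l * (c * x k - x l) + total_effect j k * (x l / c - x k)"
      by (simp add: distrib_left sum.distrib if_distrib[of "\<lambda>y. _ * y"] cong: if_cong)
    moreover have "total_effect j l * (c * x k - x l) + total_effect j k * (x l / c - x k) = 0"
      using \<open>c \<noteq> 0\<close> by (simp add: effects field_simps)
    ultimately show ?thesis
      by linarith
  qed
  from this[of "\<lambda>i. Psi i \<omega>" for \<omega>]
  have exchange_invariant: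
    "(\<Sum>s\<in>UNIV. total_effect j s * ((\<lambda>i. Psi i \<omega>)(l := c * Psi k \<omega>, k := Psi l \<omega> / c)) s)
      = (\<Sum>s\<in>UNIV. total_effect j s * Psi s \<omega>)" for \<omega>
    by simp
  have "expectation (\<lambda>\<omega>. ?F (\<lambda>i. Psi i \<omega>))
      = expectation (\<lambda>\<omega>. ?F ((\<lambda>i. Psi i \<omega>)(l := c * Psi k \<omega>, k := Psi l \<omega> / c)))"
    using noise_indep assms(1-3) by (rule integral_indep_vars_exchange) measurable
  then have exchanged: "expectation (\<lambda>\<omega>. Psi l \<omega> * g (\<Sum>s\<in>UNIV. total_effect j s * Psi s \<omega>))
      = expectation (\<lambda>\<omega>. c * Psi k \<omega> * g (\<Sum>s\<in>UNIV. total_effect j s * Psi s \<omega>))"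
    using \<open>k \<noteq> l\<close> by (simp only: exchange_invariant) simp
  have "expectation (\<lambda>\<omega>. Psi i \<omega> * g (X j \<omega>))
      = expectation (\<lambda>\<omega>. Psi i \<omega> * g (\<Sum>s\<in>UNIV. total_effect j s * Psi s \<omega>))" for i
    by (rule Bochner_Integration.integral_cong) (simp_all add: X_eq_total_effects)
  with exchanged show ?thesis
    by (simp add: mult.assoc)
qed

end

theorem proposition2:
  fixes M :: "'a measure"
    and Psi X :: "'n::finite \<Rightarrow> 'a \<Rightarrow> real"
    and PA :: "'n \<Rightarrow> 'n set"
    and theta :: "'n \<Rightarrow> 'n \<Rightarrow> real"
    and f :: "real \<Rightarrow> real"
    and j k l :: 'n
  assumes "prob_space M"
    and rv: "\<And>i. Psi i \<in> borel_measurable M"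
    and indep: "prob_space.indep_vars M (\<lambda>_. borel) Psi UNIV"
    and centered: "\<And>i. integrable M (Psi i) \<and> integral\<^sup>L M (Psi i) = 0"
    and finvar: "\<And>i. integrable M (\<lambda>\<omega>. (Psi i \<omega>)\<^sup>2)"
    and posvar: "\<And>i. prob_space.variance M (Psi i) > 0"
    and dag: "acyclic (dag_edges PA)"
    and sem: "\<And>i \<omega>. \<omega> \<in> space M \<Longrightarrow>
               X i \<omega> = Psi i \<omega> + (\<Sum>m\<in>PA i. theta i m * X m \<omega>)"
    and f_meas: "f \<in> borel_measurable borel"
    and beta_exists: "\<And>i. integrable M (\<lambda>\<omega>. X i \<omega> * f (X j \<omega>))"
    and k_anc: "k \<in> ancestors PA j"
    and ch: "children_to PA j k = {l}"
    and same_dist: "distr M borel (Psi l) = distr M borel (\<lambda>\<omega>. theta l k * Psi k \<omega>)"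
  shows "beta_coef M X f j $ k = 0"
proof -
  interpret linear_sem M PA theta Psi X
    by (intro linear_sem.intro linear_dag.intro linear_sem_axioms.intro assms(1) dag rv indep finvar
        posvar sem) (simp_all add: centered)
  define \<gamma> where "\<gamma> i = expectation (\<lambda>\<omega>. Psi i \<omega> * f (X j \<omega>))" for i
  have kl: "k \<in> PA l"
    using ch by (auto simp: children_to_def children_def)
  then have "k \<noteq> l"
    using parent_in_ancestors[of k PA l] not_own_ancestor by blast
  have var_l: "noise_var l = (theta l k)\<^sup>2 * noise_var k"
    using same_dist by (rule noise_var_eq_of_distr_eq)
  then have "theta l k \<noteq> 0"
    using noise_var_pos[of l] by auto
  have \<gamma>_l: "\<gamma> l = theta l k * \<gamma> k"
    unfolding \<gamma>_def
    using \<open>k \<noteq> l\<close> \<open>theta l k \<noteq> 0\<close> same_dist total_effect_through_unique_child[OF k_anc ch] f_meas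
    by (rule integral_noise_mult_exchange)
  have \<gamma>_other: "\<gamma> i = 0" if "i \<in> children PA k" "i \<noteq> l" for i
    unfolding \<gamma>_def using total_effect_other_child_eq_0[OF ch that] f_meas
    by (rule integral_noise_mult_eq_0) (intro integrable_noise_mult_of_X_mult beta_exists)
  have "(\<Sum>i\<in>children PA k. theta i k * (\<gamma> i / noise_var i)) = theta l k * (\<gamma> l / noise_var l)"
    using kl \<gamma>_other by (simp add: sum.remove[of _ l] children_def sum.neutral)
  then have "beta_coef M X f j $ k = \<gamma> k / noise_var k - theta l k * (\<gamma> l / noise_var l)"
    unfolding beta_coef_def \<gamma>_def by (simp add: regression_coef_nth[OF beta_exists])
  also have "\<dots> = 0"
    using \<open>theta l k \<noteq> 0\<close> by (simp add: \<gamma>_l var_l power2_eq_square)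
  finally show ?thesis .
qed

end
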